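(* Consider the multi-subflow routing problem described in the context. Assume $e_{ij}^k(\mathbf{y})>0$ for all $(i,j)\in\mathcal{A}$, all $k$ and all $\mathbf{y}\in\{0,1\}^N$, that at least one directed path from $1$ to $n$ exists, and that every subflow must recharge: for every routing $x$ in which each $x^k$ is the indicator of a simple directed $1$–$n$ path $P^k$, and every $k$, $\sum_{(i,j)\in P^k} e_{ij}^k(\mathbf{x}_{ij})>E_1^k$. Consider the routing-only problem $$\text{(R)}\quad\min_{x}\ \sum_{(i,j)\in\mathcal{A}}\sum_{k=1}^N\Bigl(\tau_{ij}^k(\mathbf{x}_{ij})+g\,e_{ij}^k(\mathbf{x}_{ij})\,x_{ij}^k\Bigr)$$ over all $x=(x_{ij}^k)$ such that, for each $k$, the arcs with $x_{ij}^k=1$ form a simple directed path from $1$ to $n$. Then the multi-subflow routing problem has an optimal solution, its optimal value equals $(\text{optimal value of (R)})-g\sum_{k=1}^N E_1^k$, and for every optimal solution $(x^*,r^*,E^* )$ of the multi-subflow routing problem, $x^*$ is an optimal solution of (R).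
   Context: Let $G=(\mathcal{N},\mathcal{A})$ be a directed graph with $\mathcal{N}=\{1,\dots,n\}$, $n\ge2$, $I(i)=\{j:(j,i)\in\mathcal{A}\}$, $O(i)=\{j:(i,j)\in\mathcal{A}\}$, with $I(1)=\emptyset$ and $O(n)=\emptyset$ (origin $1$, destination $n$). There are $N\ge1$ vehicle subflows $k=1,\dots,N$. Decision variables: $x_{ij}^k\in\{0,1\}$ for $(i,j)\in\mathcal{A}$ and each $k$, recharging amounts $r_i^k\ge0$ for $i\in\mathcal{N}$ and each $k$, and residual energies $E_j^k$, $j=2,\dots,n$. Write $\mathbf{x}_{ij}=(x_{ij}^1,\dots,x_{ij}^N)\in\{0,1\}^N$. For each arc and each $k$ there are given real-valued functions $\tau_{ij}^k(\mathbf{x}_{ij})$ (travel time of subflow $k$ on arc $(i,j)$, depending on congestion) and $e_{ij}^k(\mathbf{x}_{ij})$ (energy consumption of subflow $k$ on arc $(i,j)$). Given constants: initial energies $E_1^k\ge0$ and $g>0$ (charging time per unit energy). A triple $(x,r,E)$ is feasible if for every $k$: (a) the arcs with $x_{ij}^k=1$ form a simple directed path from $1$ to $n$; (b) $E_j^k=\sum_{i\in I(j)}\bigl(E_i^k+r_i^k-e_{ij}^k(\mathbf{x}_{ij})\bigr)x_{ij}^k$ for $j=2,\dots,n$; (c) $E_i^k\ge0$ for all $i$. The objective to be minimized is $J(x,r)=\sum_{(i,j)\in\mathcal{A}}\sum_{k=1}^N\bigl(\tau_{ij}^k(\mathbf{x}_{ij})+g\,r_i^k x_{ij}^k\bigr)$.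 An optimal solution is a feasible solution minimizing $J$. *)

theory Defs
  imports Complex_Main
begin

(* A routing is x :: nat => nat*nat => bool,
   x k (i,j) = True  iff  x_ij^k = 1.  The congestion vector
   x_ij = (x_ij^1,...,x_ij^N) is represented as a bool list of length N. *)

definition arcvec :: "nat \<Rightarrow> (nat \<Rightarrow> nat \<times> nat \<Rightarrow> bool) \<Rightarrow> nat \<times> nat \<Rightarrow> bool list" where
  "arcvec N x a = map (\<lambda>k. x k a) [1..<N+1]"

definition is_dpath :: "nat \<Rightarrow> (nat \<times> nat) set \<Rightarrow> nat list \<Rightarrow> bool" where
  "is_dpath n A p \<longleftrightarrow> p \<noteq> [] \<and> hd p = 1 \<and> last p = n \<and>
     (\<forall>i. Suc i < length p \<longrightarrow> (p ! i, p ! Suc i) \<in> A)"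

definition is_simple_path :: "nat \<Rightarrow> (nat \<times> nat) set \<Rightarrow> nat list \<Rightarrow> bool" where
  "is_simple_path n A p \<longleftrightarrow> is_dpath n A p \<and> distinct p"

definition path_arcs :: "nat list \<Rightarrow> (nat \<times> nat) set" where
  "path_arcs p = set (zip p (tl p))"

definition routing_ok :: "nat \<Rightarrow> (nat \<times> nat) set \<Rightarrow> nat \<Rightarrow> (nat \<Rightarrow> nat \<times> nat \<Rightarrow> bool) \<Rightarrow> bool" where
  "routing_ok n A N x \<longleftrightarrow>
     (\<forall>k\<in>{1..N}. \<exists>p. is_simple_path n A p \<and> {a \<in> A. x k a} = path_arcs p)"

definition msr_feasible ::
  "nat \<Rightarrow> (nat \<times> nat) set \<Rightarrow> nat \<Rightarrow> (nat \<Rightarrow> nat \<times> nat \<Rightarrow> bool list \<Rightarrow> real) \<Rightarrow> (nat \<Rightarrow> real) \<Rightarrow>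
   (nat \<Rightarrow> nat \<times> nat \<Rightarrow> bool) \<Rightarrow> (nat \<Rightarrow> nat \<Rightarrow> real) \<Rightarrow> (nat \<Rightarrow> nat \<Rightarrow> real) \<Rightarrow> bool" where
  "msr_feasible n A N e E1 x r E \<longleftrightarrow>
     routing_ok n A N x \<and>
     (\<forall>k\<in>{1..N}. \<forall>i\<in>{1..n}. r k i \<ge> 0) \<and>
     (\<forall>k\<in>{1..N}. E k 1 = E1 k) \<and>
     (\<forall>k\<in>{1..N}. \<forall>j\<in>{2..n}.
        E k j = (\<Sum>i\<in>{i. (i, j) \<in> A}.
                   (E k i + r k i - e k (i, j) (arcvec N x (i, j))) * of_bool (x k (i, j)))) \<and>
     (\<forall>k\<in>{1..N}. \<forall>i\<in>{1..n}. E k i \<ge> 0)"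

definition msr_obj ::
  "(nat \<times> nat) set \<Rightarrow> nat \<Rightarrow> (nat \<Rightarrow> nat \<times> nat \<Rightarrow> bool list \<Rightarrow> real) \<Rightarrow> real \<Rightarrow>
   (nat \<Rightarrow> nat \<times> nat \<Rightarrow> bool) \<Rightarrow> (nat \<Rightarrow> nat \<Rightarrow> real) \<Rightarrow> real" where
  "msr_obj A N tau g x r =
     (\<Sum>a\<in>A. \<Sum>k=1..N. tau k a (arcvec N x a) + g * r k (fst a) * of_bool (x k a))"

definition msr_optimal ::
  "nat \<Rightarrow> (nat \<times> nat) set \<Rightarrow> nat \<Rightarrow> (nat \<Rightarrow> nat \<times> nat \<Rightarrow> bool list \<Rightarrow> real) \<Rightarrow>
   (nat \<Rightarrow> nat \<times> nat \<Rightarrow> bool list \<Rightarrow> real) \<Rightarrow> (nat \<Rightarrow> real) \<Rightarrow> real \<Rightarrow>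
   (nat \<Rightarrow> nat \<times> nat \<Rightarrow> bool) \<Rightarrow> (nat \<Rightarrow> nat \<Rightarrow> real) \<Rightarrow> (nat \<Rightarrow> nat \<Rightarrow> real) \<Rightarrow> bool" where
  "msr_optimal n A N tau e E1 g x r E \<longleftrightarrow>
     msr_feasible n A N e E1 x r E \<and>
     (\<forall>x' r' E'. msr_feasible n A N e E1 x' r' E' \<longrightarrow> msr_obj A N tau g x r \<le> msr_obj A N tau g x' r')"

definition R_obj ::
  "(nat \<times> nat) set \<Rightarrow> nat \<Rightarrow> (nat \<Rightarrow> nat \<times> nat \<Rightarrow> bool list \<Rightarrow> real) \<Rightarrow>
   (nat \<Rightarrow> nat \<times> nat \<Rightarrow> bool list \<Rightarrow> real) \<Rightarrow> real \<Rightarrow> (nat \<Rightarrow> nat \<times> nat \<Rightarrow> bool) \<Rightarrow> real" where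
  "R_obj A N tau e g x =
     (\<Sum>a\<in>A. \<Sum>k=1..N. tau k a (arcvec N x a) + g * e k a (arcvec N x a) * of_bool (x k a))"

definition R_optimal ::
  "nat \<Rightarrow> (nat \<times> nat) set \<Rightarrow> nat \<Rightarrow> (nat \<Rightarrow> nat \<times> nat \<Rightarrow> bool list \<Rightarrow> real) \<Rightarrow>
   (nat \<Rightarrow> nat \<times> nat \<Rightarrow> bool list \<Rightarrow> real) \<Rightarrow> real \<Rightarrow> (nat \<Rightarrow> nat \<times> nat \<Rightarrow> bool) \<Rightarrow> bool" where
  "R_optimal n A N tau e g x \<longleftrightarrow>
     routing_ok n A N x \<and>
     (\<forall>x'. routing_ok n A N x' \<longrightarrow> R_obj A N tau e g x \<le> R_obj A N tau e g x')"

definition msr_optval where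
  "msr_optval n A N tau e E1 g =
     Inf {msr_obj A N tau g x r | x r E. msr_feasible n A N e E1 x r E}"

definition R_optval where
  "R_optval n A N tau e g = Inf {R_obj A N tau e g x | x. routing_ok n A N x}"

end

theory Submission
  imports Defs
begin

text \<open>Along the path of subflow \<open>k\<close> the energy balance telescopes to
  \<open>E\<^sup>k\<^sub>n = E\<^sup>k\<^sub>1 + \<Sum> r\<^sup>k - \<Sum> e\<^sup>k\<close>, so \<open>E\<^sup>k\<^sub>n \<ge> 0\<close> forces the recharged energy to be
  at least \<open>\<Sum> e\<^sup>k - E\<^sup>k\<^sub>1\<close>; hence \<open>J(x, r) \<ge> R(x) - g \<Sum>\<^sub>k E\<^sup>k\<^sub>1\<close> for every feasible triple.
  Conversely, recharging exactly \<open>\<Sum> e\<^sup>k - E\<^sup>k\<^sub>1\<close> at the origin, which is nonnegative because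
  every subflow must recharge, is feasible and attains this bound. The routing objective takes
  finitely many values, so it has a minimiser, and both claims follow.\<close>

lemma is_dpath_iff_successively:
  "is_dpath n A p \<longleftrightarrow> p \<noteq> [] \<and> hd p = 1 \<and> last p = n \<and> successively (\<lambda>u v. (u, v) \<in> A) p"
  unfolding is_dpath_def successively_conv_nth by simp

text \<open>Cutting out the cycle between two visits of the same node shortens a walk.\<close>
lemma is_dpath_imp_simple_path:
  assumes "is_dpath n A p"
  shows "\<exists>q. is_simple_path n A q"
  using assms
proof (induction "length p" arbitrary: p rule: less_induct)
  case less
  show ?case
  proof (cases "distinct p")
    case True
    then show ?thesis using less.prems unfolding is_simple_path_def by blast
  next
    case False
    then obtain xs ys zs y where p: "p = xs @ [y] @ ys @ [y] @ zs"
      using not_distinct_decomp by blast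
    let ?P = "\<lambda>u v. (u, v) \<in> A" and ?q = "xs @ [y] @ zs"
    have walk: "successively ?P p" "hd p = 1" "last p = n"
      using less.prems unfolding is_dpath_iff_successively by auto
    have "successively ?P (xs @ [y])"
      using walk(1) successively_append_iff[of ?P "xs @ [y]" "ys @ [y] @ zs"] unfolding p by simp
    moreover have "successively ?P (y # zs)"
      using walk(1) successively_append_iff[of ?P "xs @ [y] @ ys" "[y] @ zs"] unfolding p by simp
    ultimately have "successively ?P ?q"
      by (cases zs) (auto simp: successively_append_iff)
    moreover have "hd ?q = 1" "last ?q = n"
      using walk(2,3) unfolding p by (cases xs; cases zs; simp)+
    ultimately have "is_dpath n A ?q"
      unfolding is_dpath_iff_successively by simp
    moreover have "length ?q < length p" using p by simp
    ultimately show ?thesis using less.hyps by blast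
  qed
qed

lemma mem_path_arcs_iff:
  "a \<in> path_arcs p \<longleftrightarrow> (\<exists>s. Suc s < length p \<and> a = (p ! s, p ! Suc s))"
  unfolding path_arcs_def set_zip by (force simp: nth_tl)

lemma path_arcs_eq_image: "path_arcs p = (\<lambda>s. (p ! s, p ! Suc s)) ` {..<length p - 1}"
  unfolding mem_path_arcs_iff set_eq_iff by (auto simp: image_iff less_diff_conv)

lemma sum_path_arcs:
  assumes "distinct p"
  shows "(\<Sum>a\<in>path_arcs p. f a) = (\<Sum>s<length p - 1. f (p ! s, p ! Suc s))"
proof -
  have "inj_on (\<lambda>s. (p ! s, p ! Suc s)) {..<length p - 1}"
    by (intro inj_onI) (auto simp: nth_eq_iff_index_eq[OF assms])
  then show ?thesis unfolding path_arcs_eq_image by (simp add: sum.reindex)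
qed

lemma path_arcs_into_nth:
  assumes "distinct p" "Suc t < length p"
  shows "{i. (i, p ! Suc t) \<in> path_arcs p} = {p ! t}"
  using assms by (auto simp: mem_path_arcs_iff nth_eq_iff_index_eq)

lemma path_arcs_into_notin:
  assumes "j \<notin> set p"
  shows "{i. (i, j) \<in> path_arcs p} = {}"
  using assms by (auto simp: mem_path_arcs_iff)

lemma is_simple_pathD:
  assumes "is_simple_path n A p"
  shows "distinct p" "p ! 0 = 1" "p ! (length p - 1) = n" "path_arcs p \<subseteq> A"
  using assms unfolding is_simple_path_def is_dpath_def
  by (auto simp: hd_conv_nth last_conv_nth mem_path_arcs_iff)

lemma length_simple_path:
  assumes "is_simple_path n A p" "n \<noteq> 1"
  shows "2 \<le> length p"
  using assms unfolding is_simple_path_def is_dpath_def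
  by (cases p; cases "tl p") auto

lemma sum_path_arcs_from_origin:
  assumes p: "is_simple_path n A p" and "n \<noteq> 1" and r: "\<forall>i. i \<noteq> 1 \<longrightarrow> r i = 0"
  shows "(\<Sum>a\<in>path_arcs p. r (fst a)) = r 1"
proof -
  note path = is_simple_pathD[OF p]
  have len: "0 < length p - 1" using length_simple_path[OF p \<open>n \<noteq> 1\<close>] by simp
  have "r (p ! s) = (if s = 0 then r 1 else 0)" if "s < length p - 1" for s
  proof -
    have s: "s < length p" "0 < length p" using that by auto
    show ?thesis using r path(2) nth_eq_iff_index_eq[OF path(1) s] by auto
  qed
  then show ?thesis
    using len unfolding sum_path_arcs[OF path(1)] by simp
qed

definition energy_balance ::
  "nat \<Rightarrow> (nat \<times> nat) set \<Rightarrow> (nat \<times> nat \<Rightarrow> bool) \<Rightarrow> (nat \<times> nat \<Rightarrow> real) \<Rightarrow>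
   (nat \<Rightarrow> real) \<Rightarrow> (nat \<Rightarrow> real) \<Rightarrow> bool" where
  "energy_balance n A X c r E \<longleftrightarrow>
     (\<forall>j\<in>{2..n}. E j = (\<Sum>i\<in>{i. (i, j) \<in> A}. (E i + r i - c (i, j)) * of_bool (X (i, j))))"

definition subflow_feasible ::
  "nat \<Rightarrow> (nat \<times> nat) set \<Rightarrow> (nat \<times> nat \<Rightarrow> bool) \<Rightarrow> (nat \<times> nat \<Rightarrow> real) \<Rightarrow> real \<Rightarrow>
   (nat \<Rightarrow> real) \<Rightarrow> (nat \<Rightarrow> real) \<Rightarrow> bool" where
  "subflow_feasible n A X c E1 r E \<longleftrightarrow>
     (\<forall>i\<in>{1..n}. 0 \<le> r i) \<and> E 1 = E1 \<and> energy_balance n A X c r E \<and> (\<forall>i\<in>{1..n}. 0 \<le> E i)"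

lemma msr_feasible_iff_subflows:
  "msr_feasible n A N e E1 x r E \<longleftrightarrow> routing_ok n A N x \<and>
    (\<forall>k\<in>{1..N}. subflow_feasible n A (x k) (\<lambda>a. e k a (arcvec N x a)) (E1 k) (r k) (E k))"
  unfolding msr_feasible_def subflow_feasible_def energy_balance_def by blast

lemma sum_in_arcs_of_bool:
  fixes f :: "nat \<Rightarrow> real"
  assumes "finite A" "{a \<in> A. X a} = path_arcs p"
  shows "(\<Sum>i\<in>{i. (i, j) \<in> A}. f i * of_bool (X (i, j))) = (\<Sum>i\<in>{i. (i, j) \<in> path_arcs p}. f i)"
proof -
  have "finite {i. (i, j) \<in> A}"
    using finite_imageI[OF assms(1), of fst] by (rule finite_subset[rotated]) force
  then have "(\<Sum>i\<in>{i. (i, j) \<in> A}. f i * of_bool (X (i, j))) = (\<Sum>i\<in>{i \<in> {i. (i, j) \<in> A}. X (i, j)}. f i)"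
    by (simp add: sum.inter_filter Int_def)
  also have "{i \<in> {i. (i, j) \<in> A}. X (i, j)} = {i. (i, j) \<in> path_arcs p}"
    using assms(2) by blast
  finally show ?thesis .
qed

lemma nodes_after_origin:
  assumes A: "A \<subseteq> {1..n} \<times> {1..n}" "path_arcs p \<subseteq> A"
    and p: "distinct p" "p ! 0 = 1"
  shows "{2..n} \<inter> set p = {p ! Suc t | t. Suc t < length p}"
proof -
  have "p ! Suc t \<in> {2..n}" if "Suc t < length p" for t
  proof -
    have "(p ! t, p ! Suc t) \<in> A" using that A(2) mem_path_arcs_iff by blast
    moreover have "p ! Suc t \<noteq> 1"
      using p(2) nth_eq_iff_index_eq[OF p(1) that less_trans[OF zero_less_Suc that]] by auto
    ultimately show ?thesis using A(1) by auto
  qed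
  moreover have "\<exists>t. Suc t < length p \<and> j = p ! Suc t" if "j \<in> set p" "j \<noteq> 1" for j
    using that p(2) by (auto simp: in_set_conv_nth) (metis not0_implies_Suc)
  ultimately show ?thesis by fastforce
qed

lemma energy_balance_along_path:
  assumes A: "A \<subseteq> {1..n} \<times> {1..n}" and X: "{a \<in> A. X a} = path_arcs p"
    and p: "distinct p" "p ! 0 = 1"
  shows "energy_balance n A X c r E \<longleftrightarrow>
    (\<forall>t. Suc t < length p \<longrightarrow> E (p ! Suc t) = E (p ! t) + r (p ! t) - c (p ! t, p ! Suc t)) \<and>
    (\<forall>j\<in>{2..n} - set p. E j = 0)"
proof -
  let ?bal = "\<lambda>j. E j = (\<Sum>i\<in>{i. (i, j) \<in> path_arcs p}. E i + r i - c (i, j))"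
  have "finite A" using A by (rule finite_subset) simp
  have arcs: "path_arcs p \<subseteq> A" using X by blast
  have "energy_balance n A X c r E \<longleftrightarrow> (\<forall>j\<in>{2..n}. ?bal j)"
    unfolding energy_balance_def using sum_in_arcs_of_bool[OF \<open>finite A\<close> X] by simp
  also have "\<dots> \<longleftrightarrow> (\<forall>j\<in>{2..n} \<inter> set p. ?bal j) \<and> (\<forall>j\<in>{2..n} - set p. ?bal j)"
    by blast
  also have "(\<forall>j\<in>{2..n} \<inter> set p. ?bal j) \<longleftrightarrow> (\<forall>t. Suc t < length p \<longrightarrow> ?bal (p ! Suc t))"
    unfolding nodes_after_origin[OF A arcs p] by blast
  also have "\<dots> \<longleftrightarrow>
      (\<forall>t. Suc t < length p \<longrightarrow> E (p ! Suc t) = E (p ! t) + r (p ! t) - c (p ! t, p ! Suc t))"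
    using path_arcs_into_nth[OF p(1)] by simp
  also have "(\<forall>j\<in>{2..n} - set p. ?bal j) \<longleftrightarrow> (\<forall>j\<in>{2..n} - set p. E j = 0)"
    using path_arcs_into_notin by simp
  finally show ?thesis .
qed

lemma recharge_lower_bound:
  assumes A: "A \<subseteq> {1..n} \<times> {1..n}" and p: "is_simple_path n A p" and "1 \<le> n"
    and X: "{a \<in> A. X a} = path_arcs p" and F: "subflow_feasible n A X c E1 r E"
  shows "(\<Sum>a\<in>path_arcs p. c a) - E1 \<le> (\<Sum>a\<in>path_arcs p. r (fst a))"
proof -
  note path = is_simple_pathD[OF p]
  have step: "E (p ! Suc s) - E (p ! s) = r (p ! s) - c (p ! s, p ! Suc s)"
    if "Suc s < length p" for s
    using F that energy_balance_along_path[OF A X path(1) path(2)]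
    unfolding subflow_feasible_def by simp
  let ?m = "length p - 1"
  have "E n - E1 = (\<Sum>s<?m. E (p ! Suc s) - E (p ! s))"
    using sum_lessThan_telescope[of "\<lambda>s. E (p ! s)" ?m] path(2,3) F
    unfolding subflow_feasible_def by simp
  also have "\<dots> = (\<Sum>s<?m. r (p ! s) - c (p ! s, p ! Suc s))"
    by (intro sum.cong) (auto intro: step)
  also have "\<dots> = (\<Sum>a\<in>path_arcs p. r (fst a)) - (\<Sum>a\<in>path_arcs p. c a)"
    by (simp add: sum_path_arcs[OF path(1)] sum_subtractf)
  moreover have "0 \<le> E n" using F \<open>1 \<le> n\<close> unfolding subflow_feasible_def by simp
  ultimately show ?thesis by simp
qed

text \<open>All the energy still needed is charged at the origin; a node on the path at position \<open>t\<close>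
  then holds exactly the cost of the remaining arcs, and every node off the path holds nothing.\<close>
lemma recharge_at_origin:
  assumes A: "A \<subseteq> {1..n} \<times> {1..n}" and p: "is_simple_path n A p" and "n \<noteq> 1"
    and X: "{a \<in> A. X a} = path_arcs p"
    and c: "\<forall>a\<in>path_arcs p. 0 \<le> c a" and E1: "0 \<le> E1" "E1 \<le> (\<Sum>a\<in>path_arcs p. c a)"
  shows "\<exists>r E. subflow_feasible n A X c E1 r E \<and>
    (\<Sum>a\<in>path_arcs p. r (fst a)) = (\<Sum>a\<in>path_arcs p. c a) - E1"
proof -
  note path = is_simple_pathD[OF p]
  define m where "m = length p - 1"
  define rem where "rem t = (\<Sum>s\<in>{t..<m}. c (p ! s, p ! Suc s))" for t
  define pos where "pos = the_inv_into {..<length p} ((!) p)"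
  define r :: "nat \<Rightarrow> real" where "r i = (if i = 1 then rem 0 - E1 else 0)" for i
  define E :: "nat \<Rightarrow> real"
    where "E j = (if j = 1 then E1 else if j \<in> set p then rem (pos j) else 0)" for j
  have m: "0 < m" "Suc m = length p"
    using length_simple_path[OF p \<open>n \<noteq> 1\<close>] unfolding m_def by auto
  have total: "(\<Sum>a\<in>path_arcs p. c a) = rem 0"
    unfolding rem_def m_def sum_path_arcs[OF path(1)] by (simp add: atLeast0LessThan)
  have origin: "p ! t = 1 \<longleftrightarrow> t = 0" if "t < length p" for t
    using nth_eq_iff_index_eq[OF path(1) that le_less_trans[OF le0 that]] path(2) by auto
  have pos: "pos (p ! t) = t" if "t < length p" for t
    unfolding pos_def using that by (simp add: the_inv_into_f_f inj_on_nth[OF path(1)])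
  have level: "E (p ! t) + r (p ! t) = rem t" if "t < length p" for t
    using that origin[OF that] pos[OF that] unfolding E_def r_def by auto
  have rem_step: "rem t = c (p ! t, p ! Suc t) + rem (Suc t)" if "t < m" for t
    unfolding rem_def using that by (simp add: sum.atLeast_Suc_lessThan)
  have "(p ! s, p ! Suc s) \<in> path_arcs p" if "s < m" for s
    using that unfolding m_def mem_path_arcs_iff by (intro exI[of _ s]) auto
  then have rem_nonneg: "0 \<le> rem t" for t
    unfolding rem_def using c by (intro sum_nonneg) auto
  have "E (p ! Suc t) = E (p ! t) + r (p ! t) - c (p ! t, p ! Suc t)"
    if "Suc t < length p" for t
    using level[OF that] level[of t] rem_step[of t] origin[OF that] that m
    unfolding r_def by auto
  moreover have "E j = 0" if "j \<notin> set p" for j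
    using that nth_mem[OF zero_less_Suc[of m, unfolded m(2)]] path(2) unfolding E_def by auto
  ultimately have "energy_balance n A X c r E"
    using energy_balance_along_path[OF A X path(1) path(2)] by blast
  moreover have "(\<Sum>a\<in>path_arcs p. r (fst a)) = rem 0 - E1"
    using sum_path_arcs_from_origin[OF p \<open>n \<noteq> 1\<close>, of r] unfolding r_def by simp
  moreover have "\<forall>i. 0 \<le> r i" "\<forall>i. 0 \<le> E i"
    using E1 total rem_nonneg unfolding r_def E_def by auto
  moreover have "E 1 = E1" unfolding E_def by simp
  ultimately show ?thesis
    using total unfolding subflow_feasible_def by - (rule exI[of _ r], rule exI[of _ E], simp)
qed

lemma msr_obj_minus_R_obj:
  assumes "finite A"
  shows "msr_obj A N tau g x r - R_obj A N tau e g x =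
    g * (\<Sum>k=1..N. (\<Sum>a\<in>{a \<in> A. x k a}. r k (fst a)) - (\<Sum>a\<in>{a \<in> A. x k a}. e k a (arcvec N x a)))"
proof -
  have "msr_obj A N tau g x r - R_obj A N tau e g x =
      (\<Sum>a\<in>A. \<Sum>k=1..N. g * (if x k a then r k (fst a) - e k a (arcvec N x a) else 0))"
    unfolding msr_obj_def R_obj_def sum_subtractf[symmetric]
    by (intro sum.cong refl) (simp add: algebra_simps)
  also have "\<dots> = g * (\<Sum>k=1..N. \<Sum>a\<in>A. if x k a then r k (fst a) - e k a (arcvec N x a) else 0)"
    by (subst sum.swap) (simp add: sum_distrib_left)
  also have "\<dots> = g * (\<Sum>k=1..N. (\<Sum>a\<in>{a \<in> A. x k a}. r k (fst a)) - (\<Sum>a\<in>{a \<in> A. x k a}. e k a (arcvec N x a)))"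
    unfolding sum.inter_filter[OF assms] sum_subtractf[symmetric]
    by (intro arg_cong[where f = "(*) g"] sum.cong refl) simp
  finally show ?thesis .
qed

lemma msr_obj_lower_bound:
  assumes A: "A \<subseteq> {1..n} \<times> {1..n}" and "1 \<le> n" "0 \<le> g"
    and F: "msr_feasible n A N e E1 x r E"
  shows "R_obj A N tau e g x - g * (\<Sum>k=1..N. E1 k) \<le> msr_obj A N tau g x r"
proof -
  have "0 \<le> (\<Sum>a\<in>{a \<in> A. x k a}. r k (fst a)) - (\<Sum>a\<in>{a \<in> A. x k a}. e k a (arcvec N x a)) + E1 k"
    if k: "k \<in> {1..N}" for k
  proof -
    obtain p where p: "is_simple_path n A p" "{a \<in> A. x k a} = path_arcs p"
      using F k unfolding msr_feasible_iff_subflows routing_ok_def by blast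
    have "subflow_feasible n A (x k) (\<lambda>a. e k a (arcvec N x a)) (E1 k) (r k) (E k)"
      using F k unfolding msr_feasible_iff_subflows by blast
    from recharge_lower_bound[OF A p(1) \<open>1 \<le> n\<close> p(2) this] show ?thesis
      unfolding p(2) by simp
  qed
  then have "0 \<le> g * ((\<Sum>k=1..N. (\<Sum>a\<in>{a \<in> A. x k a}. r k (fst a)) -
      (\<Sum>a\<in>{a \<in> A. x k a}. e k a (arcvec N x a))) + (\<Sum>k=1..N. E1 k))"
    unfolding sum.distrib[symmetric] using \<open>0 \<le> g\<close> by (intro mult_nonneg_nonneg sum_nonneg) auto
  then show ?thesis
    using msr_obj_minus_R_obj[OF finite_subset[OF A], of N tau g x r e] by (simp add: distrib_left)
qed

lemma msr_feasible_recharge_at_origin: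
  assumes A: "A \<subseteq> {1..n} \<times> {1..n}" and "n \<noteq> 1" and x: "routing_ok n A N x"
    and E1: "\<forall>k\<in>{1..N}. 0 \<le> E1 k"
    and e: "\<forall>k\<in>{1..N}. \<forall>a\<in>A. 0 \<le> e k a (arcvec N x a)"
    and must_recharge: "\<forall>k\<in>{1..N}. E1 k \<le> (\<Sum>a\<in>{a \<in> A. x k a}. e k a (arcvec N x a))"
  shows "\<exists>r E. msr_feasible n A N e E1 x r E \<and>
    msr_obj A N tau g x r = R_obj A N tau e g x - g * (\<Sum>k=1..N. E1 k)"
proof -
  have "\<forall>k\<in>{1..N}. \<exists>r E. subflow_feasible n A (x k) (\<lambda>a. e k a (arcvec N x a)) (E1 k) r E \<and>
      (\<Sum>a\<in>{a \<in> A. x k a}. r (fst a)) = (\<Sum>a\<in>{a \<in> A. x k a}. e k a (arcvec N x a)) - E1 k"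
  proof
    fix k assume k: "k \<in> {1..N}"
    obtain p where p: "is_simple_path n A p" "{a \<in> A. x k a} = path_arcs p"
      using x k unfolding routing_ok_def by blast
    have "\<forall>a\<in>path_arcs p. 0 \<le> e k a (arcvec N x a)"
      using e k p(2) by blast
    then show "\<exists>r E. subflow_feasible n A (x k) (\<lambda>a. e k a (arcvec N x a)) (E1 k) r E \<and>
      (\<Sum>a\<in>{a \<in> A. x k a}. r (fst a)) = (\<Sum>a\<in>{a \<in> A. x k a}. e k a (arcvec N x a)) - E1 k"
      using recharge_at_origin[OF A p(1) \<open>n \<noteq> 1\<close> p(2), of "\<lambda>a. e k a (arcvec N x a)" "E1 k"]
        E1[rule_format, OF k] must_recharge[rule_format, OF k] p(2) by simp
  qed
  then obtain r E where rE: "\<forall>k\<in>{1..N}.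
      subflow_feasible n A (x k) (\<lambda>a. e k a (arcvec N x a)) (E1 k) (r k) (E k) \<and>
      (\<Sum>a\<in>{a \<in> A. x k a}. r k (fst a)) = (\<Sum>a\<in>{a \<in> A. x k a}. e k a (arcvec N x a)) - E1 k"
    unfolding bchoice_iff by (elim exE) (erule that)
  then have "msr_feasible n A N e E1 x r E"
    using x unfolding msr_feasible_iff_subflows by blast
  moreover have "msr_obj A N tau g x r - R_obj A N tau e g x = - g * (\<Sum>k=1..N. E1 k)"
    using rE by (simp add: msr_obj_minus_R_obj[OF finite_subset[OF A]] sum_negf)
  ultimately show ?thesis by - (rule exI[of _ r], rule exI[of _ E], simp add: algebra_simps)
qed

lemma ex_routing_ok:
  assumes "\<exists>p. is_dpath n A p"
  shows "\<exists>x. routing_ok n A N x"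
proof -
  obtain p where p: "is_simple_path n A p"
    using assms is_dpath_imp_simple_path by blast
  then have "{a \<in> A. a \<in> path_arcs p} = path_arcs p"
    using is_simple_pathD(4)[OF p] by blast
  then have "routing_ok n A N (\<lambda>k a. a \<in> path_arcs p)"
    unfolding routing_ok_def using p by blast
  then show ?thesis by blast
qed

lemma finite_range_R_obj:
  assumes "finite A"
  shows "finite (range (R_obj A N tau e g))"
proof -
  let ?chi = "\<lambda>S k a. (k, a) \<in> S"
  have "R_obj A N tau e g x = R_obj A N tau e g (?chi ({1..N} \<times> A \<inter> {(k, a). x k a}))" for x
  proof -
    have "arcvec N x a = arcvec N (?chi ({1..N} \<times> A \<inter> {(k, a). x k a})) a" if "a \<in> A" for a
      unfolding arcvec_def using that by (intro map_cong) auto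
    then show ?thesis unfolding R_obj_def by (intro sum.cong refl) auto
  qed
  then have "range (R_obj A N tau e g) \<subseteq> (\<lambda>S. R_obj A N tau e g (?chi S)) ` Pow ({1..N} \<times> A)"
    by blast
  then show ?thesis
    by (rule finite_subset) (use assms in simp)
qed

lemma ex_min_if_finite_range:
  fixes f :: "'a \<Rightarrow> 'b::linorder"
  assumes "finite (range f)" "P x"
  shows "\<exists>x0. P x0 \<and> (\<forall>x. P x \<longrightarrow> f x0 \<le> f x)"
proof -
  have fin: "finite (f ` {x. P x})"
    using assms(1) by (rule finite_subset[rotated]) blast
  moreover have "f ` {x. P x} \<noteq> {}" using assms(2) by blast
  ultimately have "Min (f ` {x. P x}) \<in> f ` {x. P x}" by (rule Min_in)
  then obtain x0 where "P x0" "f x0 = Min (f ` {x. P x})" by auto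
  then show ?thesis using fin by (auto intro: Min_le)
qed

lemma optimum_via_reduced_problem:
  fixes J :: "'x \<Rightarrow> 'y \<Rightarrow> real" and R :: "'x \<Rightarrow> real"
  assumes lower: "\<And>x y z. F x y z \<Longrightarrow> P x \<and> R x - c \<le> J x y"
    and attained: "\<And>x. P x \<Longrightarrow> \<exists>y z. F x y z \<and> J x y = R x - c"
    and x0: "P x0" "\<And>x. P x \<Longrightarrow> R x0 \<le> R x"
  shows "(\<exists>x y z. F x y z \<and> (\<forall>x' y' z'. F x' y' z' \<longrightarrow> J x y \<le> J x' y')) \<and>
    Inf {J x y | x y z. F x y z} = Inf {R x | x. P x} - c \<and>
    (\<forall>x y z. F x y z \<and> (\<forall>x' y' z'. F x' y' z' \<longrightarrow> J x y \<le> J x' y') \<longrightarrow>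
       (P x \<and> (\<forall>x'. P x' \<longrightarrow> R x \<le> R x')) \<and> J x y = Inf {R x | x. P x} - c)"
proof -
  have R_inf: "Inf {R x | x. P x} = R x0"
    using x0 by (intro cInf_eq_minimum) auto
  obtain y0 z0 where y0: "F x0 y0 z0" "J x0 y0 = R x0 - c"
    using attained[OF x0(1)] by blast
  have J_ge: "R x0 - c \<le> J x y" if "F x y z" for x y z
    using lower[OF that] x0(2) by force
  have J_inf: "Inf {J x y | x y z. F x y z} = R x0 - c"
  proof (rule cInf_eq_minimum)
    show "R x0 - c \<in> {J x y | x y z. F x y z}"
      using y0 by (auto intro!: exI[of _ x0] exI[of _ y0])
  qed (use J_ge in blast)
  have "(P x \<and> (\<forall>x'. P x' \<longrightarrow> R x \<le> R x')) \<and> J x y = R x0 - c"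
    if opt: "F x y z" "\<forall>x' y' z'. F x' y' z' \<longrightarrow> J x y \<le> J x' y'" for x y z
  proof -
    have J_eq: "J x y = R x0 - c"
      using opt y0 J_ge by force
    have "R x \<le> R x'" if x': "P x'" for x'
    proof -
      obtain y' z' where "F x' y' z'" "J x' y' = R x' - c"
        using attained[OF x'] by blast
      then show ?thesis
        using opt(2) lower[OF opt(1)] J_eq by force
    qed
    then show ?thesis using lower[OF opt(1)] J_eq by blast
  qed
  moreover have "F x0 y0 z0 \<and> (\<forall>x' y' z'. F x' y' z' \<longrightarrow> J x0 y0 \<le> J x' y')"
    using y0 J_ge by simp
  ultimately show ?thesis
    unfolding R_inf J_inf by blast
qed

theorem mainTheorem6:
  fixes n N :: nat and A :: "(nat \<times> nat) set"
    and tau e :: "nat \<Rightarrow> nat \<times> nat \<Rightarrow> bool list \<Rightarrow> real"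
    and E1 :: "nat \<Rightarrow> real" and g :: real
  assumes n2: "n \<ge> 2"
    and A_nodes: "A \<subseteq> {1..n} \<times> {1..n}"
    and I1: "\<forall>j. (j, 1) \<notin> A"
    and On: "\<forall>j. (n, j) \<notin> A"
    and N1: "N \<ge> 1"
    and E1_nonneg: "\<forall>k\<in>{1..N}. E1 k \<ge> 0"
    and g_pos: "g > 0"
    and e_pos: "\<forall>a\<in>A. \<forall>k\<in>{1..N}. \<forall>y. length y = N \<longrightarrow> e k a y > 0"
    and path_ex: "\<exists>p. is_dpath n A p"
    and must_recharge: "\<forall>x. routing_ok n A N x \<longrightarrow>
          (\<forall>k\<in>{1..N}. (\<Sum>a\<in>{a \<in> A. x k a}. e k a (arcvec N x a)) > E1 k)"
  shows "(\<exists>x r E. msr_optimal n A N tau e E1 g x r E) \<and>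
         msr_optval n A N tau e E1 g = R_optval n A N tau e g - g * (\<Sum>k=1..N. E1 k) \<and>
         (\<forall>x r E. msr_optimal n A N tau e E1 g x r E \<longrightarrow>
            R_optimal n A N tau e g x \<and>
            msr_obj A N tau g x r = R_optval n A N tau e g - g * (\<Sum>k=1..N. E1 k))"
proof -
  have "finite A" using A_nodes by (rule finite_subset) simp
  obtain x1 where x1: "routing_ok n A N x1"
    using ex_routing_ok[OF path_ex] by blast
  obtain x0 where x0: "routing_ok n A N x0"
      "\<And>x. routing_ok n A N x \<Longrightarrow> R_obj A N tau e g x0 \<le> R_obj A N tau e g x"
    using ex_min_if_finite_range[where P = "routing_ok n A N",
        OF finite_range_R_obj[OF \<open>finite A\<close>, of N tau e g] x1] by blast
  have lower: "routing_ok n A N x \<and>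
      R_obj A N tau e g x - g * (\<Sum>k=1..N. E1 k) \<le> msr_obj A N tau g x r"
    if "msr_feasible n A N e E1 x r E" for x r E
    using that msr_obj_lower_bound[OF A_nodes _ _ that] n2 g_pos unfolding msr_feasible_def by simp
  have attained: "\<exists>r E. msr_feasible n A N e E1 x r E \<and>
      msr_obj A N tau g x r = R_obj A N tau e g x - g * (\<Sum>k=1..N. E1 k)"
    if x: "routing_ok n A N x" for x
  proof (rule msr_feasible_recharge_at_origin[OF A_nodes _ x E1_nonneg])
    show "\<forall>k\<in>{1..N}. \<forall>a\<in>A. 0 \<le> e k a (arcvec N x a)"
      using e_pos by (simp add: arcvec_def less_imp_le)
    show "\<forall>k\<in>{1..N}. E1 k \<le> (\<Sum>a\<in>{a \<in> A. x k a}. e k a (arcvec N x a))"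
      using must_recharge x by (simp add: less_imp_le)
  qed (use n2 in simp)
  show ?thesis
    unfolding msr_optimal_def msr_optval_def R_optimal_def R_optval_def
    by (rule optimum_via_reduced_problem[where F = "msr_feasible n A N e E1" and J = "msr_obj A N tau g",
          OF lower attained x0])
qed

end
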